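(* (a) The space $\mathcal H^-_{4,\tau}$ is one-dimensional, spanned by $\theta^-_4=\theta_{1,4}-\theta_{3,4}$. (b) For every positive integer $k$, the map $\mathcal H^+_{2k,\tau}\to\mathcal H^-_{2k+4,\tau}$, $\theta^+\mapsto\theta^-_4\,\theta^+$, is a linear isomorphism.
   Context: $\tau\in\mathbb C$, $\mathrm{Im}\,\tau>0$. For a positive integer $k'$ and $0\le m<k'$, $\theta_{m,k'}(z)=\sum_{p\in\mathbb Z}\exp\big(\pi i\frac{\tau}{k'}(m+k'p)^2+2\pi i(m+k'p)z\big)$; these span the holomorphic sections of $L_1^{k'}$ on $X_\tau=\mathbb C/(\mathbb Z+\tau\mathbb Z)$ (pulled back to $\mathbb C$), where $L_1$ has factors of automorphy $e(a+\tau p,z)=\exp(-2\pi ipz-\pi i\tau p^2)$. $\mathcal H^+_{k',\tau}$ and $\mathcal H^-_{k',\tau}$ are the even, resp. odd (under $z\mapsto-z$), elements of this span. *)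

theory Defs
  imports "HOL-Analysis.Analysis"
begin

definition theta :: "nat \<Rightarrow> nat \<Rightarrow> complex \<Rightarrow> complex \<Rightarrow> complex" where
  "theta m k' \<tau> z =
     (\<Sum>\<^sub>\<infinity>p::int. exp (pi * \<i> * (\<tau> / of_nat k') * (of_int (int m + int k' * p))^2
                         + 2 * pi * \<i> * of_int (int m + int k' * p) * z))"

definition Hspace :: "nat \<Rightarrow> complex \<Rightarrow> (complex \<Rightarrow> complex) set" where
  "Hspace k' \<tau> = {f. \<exists>c :: nat \<Rightarrow> complex. f = (\<lambda>z. \<Sum>m<k'. c m * theta m k' \<tau> z)}"

definition Hplus :: "nat \<Rightarrow> complex \<Rightarrow> (complex \<Rightarrow> complex) set" where
  "Hplus k' \<tau> = {f \<in> Hspace k' \<tau>. \<forall>z. f (- z) = f z}"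

definition Hminus :: "nat \<Rightarrow> complex \<Rightarrow> (complex \<Rightarrow> complex) set" where
  "Hminus k' \<tau> = {f \<in> Hspace k' \<tau>. \<forall>z. f (- z) = - f z}"

definition theta4_minus :: "complex \<Rightarrow> complex \<Rightarrow> complex" where
  "theta4_minus \<tau> z = theta 1 4 \<tau> z - theta 3 4 \<tau> z"

end

theory Submission
  imports Defs "HOL-Complex_Analysis.Complex_Analysis" "HOL-Library.Function_Algebras"
begin

(* The identity
     tau/4 a^2 + tau/K b^2 = tau/(K+4) (a+b)^2 + tau/(4K(K+4)) (K a - 4 b)^2
   regroups the product of theta series of levels 4 and K into a finite combination of theta
   series of level K + 4 with theta constants as coefficients, so multiplication by the odd
   function theta4_minus maps even sections of level 2k to odd ones of level 2k + 4.  It is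
   injective because theta4_minus is a nonzero entire function.  Comparing Fourier coefficients
   on [0,1] shows that the k + 1 even functions theta_j + theta_{-j}, 0 <= j <= k, are
   independent, while the odd functions of level 2k + 4 are spanned by the k + 1 differences
   theta_m - theta_{-m}, 1 <= m <= k + 1; hence the image, a subspace, is everything.  At
   level 4 the same spanning argument leaves only theta_1 - theta_{-1} = theta4_minus. *)

lemma linear_minus_quadratic_le:
  fixes a b x :: real
  assumes "a > 0"
  shows "b * x - a * x\<^sup>2 \<le> b\<^sup>2 / (4 * a)"
proof -
  have "b\<^sup>2 / (4 * a) - (b * x - a * x\<^sup>2) = (2 * a * x - b)\<^sup>2 / (4 * a)"
    using assms by (simp add: field_simps power2_eq_square)
  moreover have "(2 * a * x - b)\<^sup>2 / (4 * a) \<ge> 0"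
    using assms by simp
  ultimately show ?thesis by linarith
qed

lemma weighted_squares_regroup:
  fixes a b k l :: "'a :: field"
  assumes "k \<noteq> 0" "l \<noteq> 0" "k + l \<noteq> 0"
  shows "a\<^sup>2 / l + b\<^sup>2 / k = (a + b)\<^sup>2 / (k + l) + (k * a - l * b)\<^sup>2 / (l * k * (k + l))"
proof -
  define D where "D = l * k * (k + l)"
  have "D \<noteq> 0"
    using assms by (simp add: D_def)
  have "D * (a\<^sup>2 / l) = k * (k + l) * a\<^sup>2"
    using assms(2) by (simp add: D_def field_simps)
  moreover have "D * (b\<^sup>2 / k) = l * (k + l) * b\<^sup>2"
    using assms(1) by (simp add: D_def field_simps)
  moreover have "D * ((a + b)\<^sup>2 / (k + l)) = l * k * (a + b)\<^sup>2"
    using assms(3) by (simp add: D_def field_simps)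
  moreover have "D * ((k * a - l * b)\<^sup>2 / D) = (k * a - l * b)\<^sup>2"
    using \<open>D \<noteq> 0\<close> by simp
  ultimately have "D * (a\<^sup>2 / l + b\<^sup>2 / k) = D * ((a + b)\<^sup>2 / (k + l) + (k * a - l * b)\<^sup>2 / D)"
    unfolding distrib_left by (simp add: power2_eq_square algebra_simps)
  then show ?thesis
    using \<open>D \<noteq> 0\<close> by (simp add: D_def)
qed

lemma summable_on_exp_neg_abs_int: "(\<lambda>p::int. exp (- real_of_int \<bar>p\<bar>)) summable_on UNIV"
proof -
  have geometric: "(\<lambda>n::nat. exp (- real n)) summable_on UNIV"
    using summable_geometric[of "exp (-1) :: real"]
    by (subst summable_on_UNIV_nonneg_real_iff) (simp_all add: exp_of_nat_mult[symmetric])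
  have "(\<lambda>p::int. exp (- real_of_int \<bar>p\<bar>)) summable_on range int \<union> range (\<lambda>n. - int n)"
    by (intro summable_on_union; subst summable_on_reindex) (auto simp: o_def inj_on_def geometric)
  moreover have "p \<in> range int \<union> range (\<lambda>n. - int n)" for p :: int
    by (cases p rule: int_cases2) auto
  ultimately show ?thesis
    by (metis UNIV_eq_I)
qed

lemma has_sum_product:
  fixes f g :: "_ \<Rightarrow> 'a :: {banach, real_normed_field}"
  assumes f: "(f has_sum a) A" "(\<lambda>x. norm (f x)) summable_on A"
      and g: "(g has_sum b) B" "(\<lambda>y. norm (g y)) summable_on B"
  shows "((\<lambda>(x, y). f x * g y) has_sum (a * b)) (A \<times> B)"
proof (rule has_sum_SigmaI)
  show "((\<lambda>y. case (x, y) of (x, y) \<Rightarrow> f x * g y) has_sum (f x * b)) B" for x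
    using has_sum_cmult_right[OF g(1)] by simp
  show "((\<lambda>x. f x * b) has_sum (a * b)) A"
    using has_sum_cmult_left[OF f(1)] .
  have inner: "(\<lambda>y. norm (f x * g y)) summable_on B" for x
    unfolding norm_mult by (rule summable_on_cmult_right[OF g(2)])
  have "(\<Sum>\<^sub>\<infinity>y\<in>B. norm (f x * g y)) = norm (f x) * (\<Sum>\<^sub>\<infinity>y\<in>B. norm (g y))" for x
    unfolding norm_mult by (rule infsum_cmult_right[OF g(2)])
  moreover have "(\<lambda>x. norm (f x) * (\<Sum>\<^sub>\<infinity>y\<in>B. norm (g y))) summable_on A"
    by (rule summable_on_cmult_left[OF f(2)])
  ultimately have outer: "(\<lambda>x. norm (\<Sum>\<^sub>\<infinity>y\<in>B. norm (f x * g y))) summable_on A"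
    by (simp add: infsum_nonneg)
  have "(\<lambda>p. norm ((\<lambda>(x, y). f x * g y) p)) summable_on A \<times> B"
    using inner outer by (subst Infinite_Sum.abs_summable_on_Sigma_iff) simp
  then show "(\<lambda>(x, y). f x * g y) summable_on A \<times> B"
    by (rule abs_summable_summable)
qed

lemma has_sum_int_residue_classes:
  fixes F :: "int \<Rightarrow> 'a :: {comm_monoid_add, uniform_topological_group_add}"
  assumes N: "N > 0" and F: "(F has_sum s) UNIV"
    and classes: "\<And>j. ((\<lambda>e. F (j + N * e)) has_sum c j) UNIV"
  shows "(c has_sum s) {0..<N}"
proof -
  have bij: "bij_betw (\<lambda>(j, e). j + N * e) ({0..<N} \<times> UNIV) UNIV"
    by (rule bij_betwI[of _ _ _ "\<lambda>d. (d mod N, d div N)"]) (use N in auto)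
  have "((\<lambda>x. F ((\<lambda>(j, e). j + N * e) x)) has_sum s) ({0..<N} \<times> UNIV)"
    using F by (subst has_sum_reindex_bij_betw[OF bij])
  then show ?thesis
    by (rule has_sum_Sigma') (simp add: classes)
qed

lemma holomorphic_on_infsum:
  fixes f :: "'i \<Rightarrow> complex \<Rightarrow> complex"
  assumes S: "open S" and holo: "\<And>i. f i holomorphic_on S"
    and bound: "\<And>z. z \<in> S \<Longrightarrow> \<exists>r>0. cball z r \<subseteq> S \<and>
                  (\<exists>M. M summable_on UNIV \<and> (\<forall>i. \<forall>w\<in>cball z r. norm (f i w) \<le> M i))"
  shows "(\<lambda>z. \<Sum>\<^sub>\<infinity>i. f i z) holomorphic_on S"
proof -
  have "\<exists>r>0. (\<lambda>z. \<Sum>\<^sub>\<infinity>i. f i z) holomorphic_on ball z r" if "z \<in> S" for z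
  proof -
    obtain r M where r: "r > 0" "cball z r \<subseteq> S" and M: "M summable_on UNIV"
      and le: "\<And>i w. w \<in> cball z r \<Longrightarrow> norm (f i w) \<le> M i"
      using bound[OF \<open>z \<in> S\<close>] by blast
    have ul: "uniform_limit (cball z r) (\<lambda>X w. \<Sum>i\<in>X. f i w) (\<lambda>w. \<Sum>\<^sub>\<infinity>i. f i w)
                (finite_subsets_at_top UNIV)"
      using le M by (rule Weierstrass_m_test_general)
    have "continuous_on (cball z r) (\<lambda>w. \<Sum>i\<in>X. f i w)
          \<and> (\<lambda>w. \<Sum>i\<in>X. f i w) holomorphic_on ball z r" for X
    proof
      show "continuous_on (cball z r) (\<lambda>w. \<Sum>i\<in>X. f i w)"
        using holomorphic_on_subset[OF holo r(2)]
        by (intro continuous_on_sum holomorphic_on_imp_continuous_on)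
      show "(\<lambda>w. \<Sum>i\<in>X. f i w) holomorphic_on ball z r"
        using holomorphic_on_subset[OF holo subset_trans[OF ball_subset_cball r(2)]]
        by (intro holomorphic_on_sum)
    qed
    then have ev: "\<forall>\<^sub>F X in finite_subsets_at_top UNIV. continuous_on (cball z r) (\<lambda>w. \<Sum>i\<in>X. f i w)
                   \<and> (\<lambda>w. \<Sum>i\<in>X. f i w) holomorphic_on ball z r"
      by (intro always_eventually allI)
    have "(\<lambda>w. \<Sum>\<^sub>\<infinity>i. f i w) holomorphic_on ball z r"
      by (rule holomorphic_uniform_limit[OF ev ul]) simp_all
    with r show ?thesis by blast
  qed
  then have "(\<lambda>z. \<Sum>\<^sub>\<infinity>i. f i z) analytic_on S"
    by (simp add: analytic_on_def)
  then show ?thesis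
    using S by (simp add: analytic_on_open)
qed

lemma has_integral_termwise:
  fixes f :: "'i \<Rightarrow> real \<Rightarrow> 'a :: banach"
  assumes bound: "\<And>i x. x \<in> {a..b} \<Longrightarrow> norm (f i x) \<le> M i" and M: "M summable_on UNIV"
    and sums: "\<And>x. x \<in> {a..b} \<Longrightarrow> ((\<lambda>i. f i x) has_sum g x) UNIV"
    and cont: "\<And>i. continuous_on {a..b} (f i)"
    and integrals: "\<And>i. (f i has_integral c i) {a..b}" and c: "(c has_sum s) UNIV"
  shows "(g has_integral s) {a..b}"
proof -
  have "uniform_limit {a..b} (\<lambda>X x. \<Sum>i\<in>X. f i x) g (finite_subsets_at_top UNIV)"
    using bound sums M by (rule Weierstrass_m_test_general')
  moreover have "continuous_on {a..b} (\<lambda>x. \<Sum>i\<in>X. f i x)" for X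
    by (intro continuous_on_sum cont)
  ultimately obtain I J where I: "\<And>X. ((\<lambda>x. \<Sum>i\<in>X. f i x) has_integral I X) {a..b}"
    and J: "(g has_integral J) {a..b}" and IJ: "(I \<longlongrightarrow> J) (finite_subsets_at_top UNIV)"
    by (rule uniform_limit_integral) (simp | blast)+
  have "\<forall>\<^sub>F X in finite_subsets_at_top UNIV. I X = sum c X"
    using has_integral_unique[OF I has_integral_sum[OF _ integrals]]
    by (intro eventually_finite_subsets_at_top_weakI) blast
  with IJ have "(sum c \<longlongrightarrow> J) (finite_subsets_at_top UNIV)"
    using tendsto_cong by blast
  then have "J = s"
    using c unfolding has_sum_def by (rule tendsto_unique[rotated]) simp
  with J show ?thesis by simp
qed

lemma has_integral_exp_2pi_int:
  "((\<lambda>x::real. exp (2 * pi * \<i> * of_int j * of_real x)) has_integral (if j = 0 then 1 else 0)) {0..1}"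
proof (cases "j = 0")
  case True
  then show ?thesis using has_integral_const_real[of "1::complex" 0 1] by simp
next
  case False
  define c where "c = 2 * pi * \<i> * of_int j"
  have "c \<noteq> 0" using False by (simp add: c_def)
  have "((\<lambda>x::real. exp (c * of_real x) / c) has_vector_derivative exp (c * of_real x)) (at x within {0..1})"
    for x
    using \<open>c \<noteq> 0\<close>
    by (auto intro!: has_vector_derivative_real_field derivative_eq_intros)
  then have "((\<lambda>x::real. exp (c * of_real x)) has_integral (exp c / c - 1 / c)) {0..1}"
    using fundamental_theorem_of_calculus[of 0 1 "\<lambda>x. exp (c * of_real x) / c"] by simp
  moreover have "exp c = 1"
    using exp_integer_2pi[of "of_int j"] by (simp add: c_def mult_ac)
  ultimately show ?thesis using False by (simp add: c_def)
qed

lemma holomorphic_mult_left_cancel: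
  fixes f g h :: "complex \<Rightarrow> complex"
  assumes h: "continuous_on UNIV h" "h \<noteq> (\<lambda>_. 0)"
    and f: "f holomorphic_on UNIV" and g: "g holomorphic_on UNIV"
    and eq: "\<And>z. h z * f z = h z * g z"
  shows "f = g"
proof
  fix w
  have "open {z. h z \<noteq> 0}"
    using h(1) by (simp add: open_Collect_neq continuous_on_const)
  moreover have "{z. h z \<noteq> 0} \<noteq> {}"
    using h(2) by auto
  ultimately show "f w = g w"
    using analytic_continuation_open[of "{z. h z \<noteq> 0}" UNIV f g] f g eq by auto
qed

lemma eq_if_mod_eq_plus_minus:
  fixes i j K :: nat
  assumes "i \<le> K div 2" "j \<le> K div 2"
    and "int i mod int K = int j mod int K \<or> int i mod int K = (- int j) mod int K"
  shows "i = j"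
proof -
  have "2 * i \<le> K" "2 * j \<le> K"
    using assms(1,2) by presburger+
  from assms(3) show ?thesis
  proof
    assume "int i mod int K = int j mod int K"
    then show "i = j"
      using \<open>2 * i \<le> K\<close> \<open>2 * j \<le> K\<close> by (cases "K = 0") (auto simp: mod_pos_pos_trivial)
  next
    assume "int i mod int K = (- int j) mod int K"
    then obtain t where t: "int i + int j = int K * t"
      by (metis mod_eq_dvd_iff diff_minus_eq_add dvd_def)
    consider "t \<le> 0" | "t = 1" | "t \<ge> 2"
      by linarith
    then show "i = j"
    proof cases
      case 1
      then have "int K * t \<le> 0"
        by (simp add: mult_nonneg_nonpos)
      then show ?thesis
        using t by linarith
    next
      case 2
      then have "int i + int j = int K"
        using t by simp
      then show ?thesis
        using \<open>2 * i \<le> K\<close> \<open>2 * j \<le> K\<close> by linarith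
    next
      case 3
      then have "int K * 2 \<le> int K * t"
        by (intro mult_left_mono) auto
      then show ?thesis
        using t \<open>2 * i \<le> K\<close> \<open>2 * j \<le> K\<close> by linarith
    qed
  qed
qed

section \<open>Theta series\<close>

definition theta_term :: "nat \<Rightarrow> complex \<Rightarrow> complex \<Rightarrow> int \<Rightarrow> complex" where
  "theta_term K \<tau> z n = exp (pi * \<i> * (\<tau> / of_nat K) * (of_int n)\<^sup>2 + 2 * pi * \<i> * of_int n * z)"

definition theta_int :: "nat \<Rightarrow> complex \<Rightarrow> int \<Rightarrow> complex \<Rightarrow> complex" where
  "theta_int K \<tau> m z = (\<Sum>\<^sub>\<infinity>p::int. theta_term K \<tau> z (m + int K * p))"

lemma theta_eq_theta_int: "theta m K \<tau> = theta_int K \<tau> (int m)"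
  by (simp add: fun_eq_iff theta_def theta_int_def theta_term_def)

lemma theta_term_nonzero: "theta_term K \<tau> z n \<noteq> 0"
  by (simp add: theta_term_def)

lemma norm_theta_term:
  "norm (theta_term K \<tau> z n) = exp (- pi * Im \<tau> / K * (of_int n)\<^sup>2 - 2 * pi * of_int n * Im z)"
  unfolding theta_term_def norm_exp_eq_Re
  by (simp add: Re_divide_of_nat power2_eq_square algebra_simps)

lemma norm_theta_term_le:
  assumes K: "K > 0" and \<tau>: "Im \<tau> > 0" and z: "\<bar>Im z\<bar> \<le> Y"
  shows "norm (theta_term K \<tau> z n) \<le> exp ((2 * pi * Y + 1)\<^sup>2 / (4 * (pi * Im \<tau> / K)) - \<bar>n\<bar>)"
proof -
  define a where "a = pi * Im \<tau> / K"
  have "a > 0"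
    using K \<tau> by (simp add: a_def)
  have "- (of_int n * Im z) \<le> \<bar>of_int n\<bar> * Y"
    using z abs_mult[of "of_int n" "Im z"] mult_left_mono[OF z, of "\<bar>of_int n\<bar>"] by linarith
  then have "- 2 * pi * of_int n * Im z \<le> 2 * pi * Y * \<bar>of_int n\<bar>"
    using mult_left_mono[of "- (of_int n * Im z)" "\<bar>of_int n\<bar> * Y" "2 * pi"] by (simp add: algebra_simps)
  moreover have "(2 * pi * Y + 1) * \<bar>of_int n\<bar> - a * \<bar>of_int n\<bar>\<^sup>2 \<le> (2 * pi * Y + 1)\<^sup>2 / (4 * a)"
    by (rule linear_minus_quadratic_le[OF \<open>a > 0\<close>])
  ultimately have "- a * (of_int n)\<^sup>2 - 2 * pi * of_int n * Im z \<le> (2 * pi * Y + 1)\<^sup>2 / (4 * a) - \<bar>n\<bar>"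
    by (simp add: algebra_simps)
  then show ?thesis
    by (simp add: norm_theta_term a_def)
qed

lemma theta_term_majorant:
  assumes K: "K > 0" and \<tau>: "Im \<tau> > 0" and c: "c \<noteq> 0"
  obtains B where "B summable_on UNIV"
    and "\<And>z p. \<bar>Im z\<bar> \<le> Y \<Longrightarrow> norm (theta_term K \<tau> z (m + c * p)) \<le> B p"
proof
  define C where "C = (2 * pi * Y + 1)\<^sup>2 / (4 * (pi * Im \<tau> / K))"
  show "(\<lambda>p. exp (C + \<bar>m\<bar>) * exp (- real_of_int \<bar>p\<bar>)) summable_on UNIV"
    by (intro summable_on_cmult_right summable_on_exp_neg_abs_int)
  fix z p
  assume z: "\<bar>Im z\<bar> \<le> Y"
  have "1 * \<bar>p\<bar> \<le> \<bar>c\<bar> * \<bar>p\<bar>"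
    using c by (intro mult_right_mono) auto
  then have "\<bar>p\<bar> \<le> \<bar>c * p\<bar>"
    by (simp add: abs_mult)
  then have "- \<bar>m + c * p\<bar> \<le> \<bar>m\<bar> - \<bar>p\<bar>"
    by linarith
  then have "- real_of_int \<bar>m + c * p\<bar> \<le> real_of_int \<bar>m\<bar> - real_of_int \<bar>p\<bar>"
    by linarith
  then have "norm (theta_term K \<tau> z (m + c * p)) \<le> exp (C + \<bar>m\<bar> - \<bar>p\<bar>)"
    using norm_theta_term_le[OF K \<tau> z, of "m + c * p"] unfolding C_def[symmetric]
    by (smt (verit) exp_le_cancel_iff)
  then show "norm (theta_term K \<tau> z (m + c * p)) \<le> exp (C + \<bar>m\<bar>) * exp (- real_of_int \<bar>p\<bar>)"
    by (simp add: exp_add[symmetric])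
qed

lemma summable_norm_theta_term:
  assumes "K > 0" "Im \<tau> > 0" "c \<noteq> 0"
  shows "(\<lambda>p. norm (theta_term K \<tau> z (m + c * p))) summable_on UNIV"
proof -
  obtain B where B: "B summable_on UNIV"
    and le: "\<And>w p. \<bar>Im w\<bar> \<le> \<bar>Im z\<bar> \<Longrightarrow> norm (theta_term K \<tau> w (m + c * p)) \<le> B p"
    using theta_term_majorant[OF assms, of "\<bar>Im z\<bar>" m] by blast
  show ?thesis
    by (rule Infinite_Sum.abs_summable_on_comparison_test'[OF B]) (simp add: le)
qed

lemma theta_int_has_sum:
  assumes "K > 0" "Im \<tau> > 0"
  shows "((\<lambda>p. theta_term K \<tau> z (m + int K * p)) has_sum theta_int K \<tau> m z) UNIV"
proof -
  have "int K \<noteq> 0"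
    using assms(1) by simp
  then show ?thesis
    unfolding theta_int_def
    by (rule has_sum_infsum[OF abs_summable_summable[OF summable_norm_theta_term[OF assms]]])
qed

lemma theta_int_shift: "theta_int K \<tau> (m + int K * j) = theta_int K \<tau> m"
proof
  fix z
  have bij: "bij_betw (\<lambda>p. p + j) UNIV UNIV"
    by (rule bij_betwI[of _ _ _ "\<lambda>p. p - j"]) auto
  have "theta_int K \<tau> m z = (\<Sum>\<^sub>\<infinity>p. theta_term K \<tau> z (m + int K * (p + j)))"
    unfolding theta_int_def by (rule infsum_reindex_bij_betw[OF bij, symmetric])
  then show "theta_int K \<tau> (m + int K * j) z = theta_int K \<tau> m z"
    by (simp add: theta_int_def algebra_simps)
qed

lemma theta_int_cong:
  assumes "m mod int K = m' mod int K"
  shows "theta_int K \<tau> m = theta_int K \<tau> m'"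
  by (metis assms mod_mult_div_eq theta_int_shift)

lemma theta_term_uminus: "theta_term K \<tau> (- z) n = theta_term K \<tau> z (- n)"
  by (simp add: theta_term_def)

lemma theta_int_uminus: "theta_int K \<tau> m (- z) = theta_int K \<tau> (- m) z"
proof -
  have bij: "bij_betw uminus (UNIV :: int set) UNIV"
    by (rule bij_betwI[of _ _ _ uminus]) auto
  have "theta_int K \<tau> (- m) z = (\<Sum>\<^sub>\<infinity>p. theta_term K \<tau> z (- m + int K * (- p)))"
    unfolding theta_int_def by (rule infsum_reindex_bij_betw[OF bij, symmetric])
  then show ?thesis
    by (simp add: theta_int_def theta_term_uminus)
qed

lemma holomorphic_theta_int:
  assumes K: "K > 0" and \<tau>: "Im \<tau> > 0"
  shows "theta_int K \<tau> m holomorphic_on UNIV"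
  unfolding theta_int_def[abs_def]
proof (rule holomorphic_on_infsum)
  show "(\<lambda>z. theta_term K \<tau> z (m + int K * p)) holomorphic_on UNIV" for p
    unfolding theta_term_def by (intro holomorphic_intros)
  fix z :: complex
  obtain B where "B summable_on UNIV"
    and B: "\<And>w p. \<bar>Im w\<bar> \<le> \<bar>Im z\<bar> + 1 \<Longrightarrow> norm (theta_term K \<tau> w (m + int K * p)) \<le> B p"
    using theta_term_majorant[OF K \<tau>, of "int K" "\<bar>Im z\<bar> + 1" m] K by auto
  moreover have "\<bar>Im w\<bar> \<le> \<bar>Im z\<bar> + 1" if "w \<in> cball z 1" for w
    using that abs_Im_le_cmod[of "w - z"] by (simp add: dist_norm norm_minus_commute)
  ultimately show "\<exists>r>0. cball z r \<subseteq> UNIV \<and> (\<exists>B. B summable_on UNIV \<and>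
                     (\<forall>p. \<forall>w\<in>cball z r. norm (theta_term K \<tau> w (m + int K * p)) \<le> B p))"
    by (intro exI[of _ 1]) auto
qed (rule open_UNIV)

lemma theta_int_fourier_coeff:
  assumes K: "K > 0" and \<tau>: "Im \<tau> > 0"
  shows "((\<lambda>x::real. theta_int K \<tau> m (of_real x) * exp (- 2 * pi * \<i> * of_int n * of_real x))
           has_integral (if n mod int K = m mod int K then theta_term K \<tau> 0 n else 0)) {0..1}"
proof -
  define E where "E x = exp (- 2 * pi * \<i> * of_int n * of_real x)" for x :: real
  define c where "c p = theta_term K \<tau> 0 (m + int K * p) * (if m + int K * p - n = 0 then 1 else 0)" for p
  obtain B where B: "B summable_on UNIV"
    and le: "\<And>z p. \<bar>Im z\<bar> \<le> 0 \<Longrightarrow> norm (theta_term K \<tau> z (m + int K * p)) \<le> B p"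
    using theta_term_majorant[OF K \<tau>, of "int K" 0 m] K by auto
  have terms: "theta_term K \<tau> (of_real x) (m + int K * p) * E x
             = theta_term K \<tau> 0 (m + int K * p) * exp (2 * pi * \<i> * of_int (m + int K * p - n) * of_real x)"
    for x p
    by (simp add: theta_term_def E_def flip: exp_add) (simp add: algebra_simps)
  have coeffs: "(c has_sum (if n mod int K = m mod int K then theta_term K \<tau> 0 n else 0)) UNIV"
  proof (cases "n mod int K = m mod int K")
    case True
    then obtain p0 where p0: "n = m + int K * p0"
      by (metis mod_eq_dvd_iff dvd_def add.commute diff_add_cancel)
    have "(c has_sum c p0) {p0}"
      by (rule has_sum_finiteI) simp_all
    then have "(c has_sum c p0) UNIV"
      using K p0 by (subst has_sum_cong_neutral[where T = "{p0}"]) (auto simp: c_def)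
    with True p0 show ?thesis
      by (simp add: c_def)
  next
    case False
    then have "c = (\<lambda>_. 0)"
      by (auto simp: c_def fun_eq_iff)
    with False show ?thesis by simp
  qed
  have integrals: "((\<lambda>x. theta_term K \<tau> (of_real x) (m + int K * p) * E x) has_integral c p) {0..1}" for p
    unfolding terms c_def by (intro has_integral_mult_right has_integral_exp_2pi_int)
  have bound: "norm (theta_term K \<tau> (of_real x) (m + int K * p) * E x) \<le> B p" for p x
    using le[of "of_real x" p] by (simp add: E_def norm_mult norm_exp_eq_Re)
  have sums: "((\<lambda>p. theta_term K \<tau> (of_real x) (m + int K * p) * E x) has_sum
                 (theta_int K \<tau> m (of_real x) * E x)) UNIV" for x
    by (intro has_sum_cmult_left theta_int_has_sum K \<tau>)
  have cont: "continuous_on {0..1} (\<lambda>x. theta_term K \<tau> (of_real x) (m + int K * p) * E x)" for p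
    unfolding theta_term_def E_def by (intro continuous_intros)
  show ?thesis
    unfolding E_def[symmetric] by (rule has_integral_termwise[OF bound B sums cont integrals coeffs])
qed

lemma theta_term_mult:
  assumes "K > 0" "L > 0"
  shows "theta_term L \<tau> z n1 * theta_term K \<tau> z n2
       = theta_term (K + L) \<tau> z (n1 + n2) * theta_term (L * K * (K + L)) \<tau> 0 (int K * n1 - int L * n2)"
proof -
  define a :: complex where "a = of_int n1"
  define b :: complex where "b = of_int n2"
  define k :: complex where "k = of_nat K"
  define l :: complex where "l = of_nat L"
  have "k \<noteq> 0" "l \<noteq> 0" "k + l \<noteq> 0"
    using assms by (simp_all add: k_def l_def) (metis of_nat_add of_nat_eq_0_iff add_is_0 not_gr0)
  have "\<tau> * (a\<^sup>2 / l + b\<^sup>2 / k) = \<tau> * ((a + b)\<^sup>2 / (k + l) + (k * a - l * b)\<^sup>2 / (l * k * (k + l)))"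
    by (simp only: weighted_squares_regroup[OF \<open>k \<noteq> 0\<close> \<open>l \<noteq> 0\<close> \<open>k + l \<noteq> 0\<close>])
  then have key: "\<tau> / l * a\<^sup>2 + \<tau> / k * b\<^sup>2
                = \<tau> / (k + l) * (a + b)\<^sup>2 + \<tau> / (l * k * (k + l)) * (k * a - l * b)\<^sup>2"
    by (simp add: ring_distribs)
  have "pi * \<i> * (\<tau> / l) * a\<^sup>2 + 2 * pi * \<i> * a * z + (pi * \<i> * (\<tau> / k) * b\<^sup>2 + 2 * pi * \<i> * b * z)
      = pi * \<i> * (\<tau> / l * a\<^sup>2 + \<tau> / k * b\<^sup>2) + 2 * pi * \<i> * (a + b) * z" (is "?lhs = _")
    by (simp add: algebra_simps)
  also have "\<dots> = pi * \<i> * (\<tau> / (k + l) * (a + b)\<^sup>2 + \<tau> / (l * k * (k + l)) * (k * a - l * b)\<^sup>2)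
                    + 2 * pi * \<i> * (a + b) * z"
    by (simp only: key)
  also have "\<dots> = pi * \<i> * (\<tau> / (k + l)) * (a + b)\<^sup>2 + 2 * pi * \<i> * (a + b) * z
        + (pi * \<i> * (\<tau> / (l * k * (k + l))) * (k * a - l * b)\<^sup>2 + 2 * pi * \<i> * (k * a - l * b) * 0)"
    by (simp add: algebra_simps)
  finally have "?lhs = \<dots>" .
  then show ?thesis
    by (simp add: theta_term_def a_def b_def k_def l_def flip: exp_add)
qed

(* Reindexing the double series by (d, p) |-> (p, p - d) turns every inner series into a
   theta series of level K + L, by theta_term_mult. *)
lemma theta_int_mult_has_sum:
  assumes K: "K > 0" and L: "L > 0" and \<tau>: "Im \<tau> > 0"
  shows "((\<lambda>d. theta_term (L * K * (K + L)) \<tau> 0 (int K * a - int L * b + int K * int L * d)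
                * theta_int (K + L) \<tau> (a + b - int K * d) z)
           has_sum (theta_int L \<tau> a z * theta_int K \<tau> b z)) UNIV"
proof -
  define f where "f p = theta_term L \<tau> z (a + int L * p)" for p
  define g where "g q = theta_term K \<tau> z (b + int K * q)" for q
  have "((\<lambda>(p, q). f p * g q) has_sum (theta_int L \<tau> a z * theta_int K \<tau> b z)) (UNIV \<times> UNIV)"
    unfolding f_def g_def using K L \<tau>
    by (intro has_sum_product theta_int_has_sum summable_norm_theta_term) auto
  moreover have bij: "bij_betw (\<lambda>(d, p). (p, p - d)) (UNIV \<times> UNIV) (UNIV \<times> UNIV :: (int \<times> int) set)"
    by (rule bij_betwI[of _ _ _ "\<lambda>(p, q). (p - q, p)"]) auto
  ultimately have "((\<lambda>x. (\<lambda>(p, q). f p * g q) ((\<lambda>(d, p). (p, p - d)) x))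
                    has_sum (theta_int L \<tau> a z * theta_int K \<tau> b z)) (UNIV \<times> UNIV)"
    by (subst has_sum_reindex_bij_betw[OF bij])
  then show ?thesis
  proof (rule has_sum_Sigma')
    fix d :: int
    have "f p * g (p - d) = theta_term (L * K * (K + L)) \<tau> 0 (int K * a - int L * b + int K * int L * d)
            * theta_term (K + L) \<tau> z ((a + b - int K * d) + int (K + L) * p)" for p
      unfolding f_def g_def theta_term_mult[OF K L]
      by (simp add: algebra_simps)
    then show "((\<lambda>p. (\<lambda>x. (\<lambda>(p, q). f p * g q) ((\<lambda>(d, p). (p, p - d)) x)) (d, p)) has_sum
                 (theta_term (L * K * (K + L)) \<tau> 0 (int K * a - int L * b + int K * int L * d)
                  * theta_int (K + L) \<tau> (a + b - int K * d) z)) UNIV"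
      using has_sum_cmult_right[OF theta_int_has_sum[of "K + L" \<tau> z "a + b - int K * d"],
          of "theta_term (L * K * (K + L)) \<tau> 0 (int K * a - int L * b + int K * int L * d)"] K \<tau>
      by simp
  qed
qed

lemma theta_int_mult:
  assumes K: "K > 0" and L: "L > 0" and \<tau>: "Im \<tau> > 0"
  shows "theta_int L \<tau> a z * theta_int K \<tau> b z
       = (\<Sum>j\<in>{0..<int (K + L)}. theta_int (L * K * (K + L)) \<tau> (int K * a - int L * b + int K * int L * j) 0
                                 * theta_int (K + L) \<tau> (a + b - int K * j) z)"
proof -
  have "((\<lambda>j. theta_int (L * K * (K + L)) \<tau> (int K * a - int L * b + int K * int L * j) 0
               * theta_int (K + L) \<tau> (a + b - int K * j) z)
          has_sum (theta_int L \<tau> a z * theta_int K \<tau> b z)) {0..<int (K + L)}"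
  proof (rule has_sum_int_residue_classes[OF _ theta_int_mult_has_sum[OF K L \<tau>]])
    fix j :: int
    have shift: "theta_int (K + L) \<tau> (a + b - int K * (j + int (K + L) * e))
               = theta_int (K + L) \<tau> (a + b - int K * j)" for e
      using theta_int_shift[of "K + L" \<tau> "a + b - int K * j" "- int K * e"] by (simp add: algebra_simps)
    have terms: "theta_term (L * K * (K + L)) \<tau> 0 (int K * a - int L * b + int K * int L * (j + int (K + L) * e))
            * theta_int (K + L) \<tau> (a + b - int K * (j + int (K + L) * e)) z
          = theta_term (L * K * (K + L)) \<tau> 0 ((int K * a - int L * b + int K * int L * j) + int (L * K * (K + L)) * e)
            * theta_int (K + L) \<tau> (a + b - int K * j) z" for e
      unfolding shift by (simp add: algebra_simps)
    show "((\<lambda>e. theta_term (L * K * (K + L)) \<tau> 0 (int K * a - int L * b + int K * int L * (j + int (K + L) * e))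
                       * theta_int (K + L) \<tau> (a + b - int K * (j + int (K + L) * e)) z)
                     has_sum (theta_int (L * K * (K + L)) \<tau> (int K * a - int L * b + int K * int L * j) 0
                              * theta_int (K + L) \<tau> (a + b - int K * j) z)) UNIV"
      unfolding terms using K L by (intro has_sum_cmult_left theta_int_has_sum \<tau>) simp
  qed (use K in simp)
  then show ?thesis
    using has_sum_unique[OF _ has_sum_finite[of "{0..<int (K + L)}"]] by blast
qed

section \<open>Counting dimensions\<close>

lemma (in vector_space) subspace_eq_if_card_le:
  assumes U: "subspace U" "U \<subseteq> W" and T: "W \<subseteq> span T" "finite T"
    and B: "B \<subseteq> U" "independent B" "card T \<le> card B"
  shows "U = W"
proof -
  have "B \<subseteq> span T"
    using B(1) U(2) T(1) by blast
  then have "finite B"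
    using local.independent_span_bound[OF T(2) B(2)] by blast
  have "T \<subseteq> span B"
  proof
    fix x
    assume "x \<in> T"
    show "x \<in> span B"
    proof (rule ccontr)
      assume "x \<notin> span B"
      then have "independent (insert x B)" "x \<notin> B"
        using B(2) local.independent_insertI local.span_base by auto
      moreover have "insert x B \<subseteq> span T"
        using \<open>B \<subseteq> span T\<close> \<open>x \<in> T\<close> local.span_base by blast
      ultimately have "card (insert x B) \<le> card T"
        using local.independent_span_bound[OF T(2)] by blast
      with B(3) \<open>x \<notin> B\<close> \<open>finite B\<close> show False
        by simp
    qed
  qed
  then have "W \<subseteq> span B"
    using T(1) local.span_minimal[OF _ local.subspace_span] by blast
  also have "span B \<subseteq> U"
    using local.span_minimal[OF B(1) U(1)] .
  finally show ?thesis
    using U(2) by blast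
qed

lemma (in vector_space) independent_image_if_scalars_zero:
  assumes I: "finite I" and zero: "\<And>w. (\<Sum>i\<in>I. scale (w i) (v i)) = 0 \<Longrightarrow> \<forall>i\<in>I. w i = 0"
  shows "inj_on v I" and "independent (v ` I)"
proof -
  show inj: "inj_on v I"
  proof (rule inj_onI, rule ccontr)
    fix i j
    assume ij: "i \<in> I" "j \<in> I" "v i = v j" "i \<noteq> j"
    define w :: "_ \<Rightarrow> 'a" where "w l = (if l = i then 1 else if l = j then - 1 else 0)" for l
    have "scale (w l) (v l) = (if l = i then v i else 0) + (if l = j then - v j else 0)" for l
      using ij(4) by (simp add: w_def)
    then have "(\<Sum>l\<in>I. scale (w l) (v l))
               = (\<Sum>l\<in>I. (if l = i then v i else 0) + (if l = j then - v j else 0))"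
      by (intro sum.cong) auto
    also have "\<dots> = v i - v j"
      using I ij(1,2) by (simp add: sum.distrib)
    finally have "(\<Sum>l\<in>I. scale (w l) (v l)) = 0"
      using ij(3) by simp
    then have "w i = 0"
      using zero ij(1) by blast
    then show False
      by (simp add: w_def)
  qed
  show "independent (v ` I)"
  proof (rule local.independent_if_scalars_zero)
    fix f x
    assume "(\<Sum>x\<in>v ` I. scale (f x) x) = 0" and "x \<in> v ` I"
    then show "f x = 0"
      using zero[of "\<lambda>i. f (v i)"] by (auto simp: sum.reindex[OF inj])
  qed (use I in simp)
qed

interpretation cfun: vector_space "\<lambda>(c::complex) (f::complex \<Rightarrow> complex) z. c * f z"
  by unfold_locales (simp_all add: fun_eq_iff algebra_simps)

lemma sum_fun_apply: "(\<Sum>i\<in>I. f i) x = (\<Sum>i\<in>I. f i x)"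
  by (induction I rule: infinite_finite_induct) auto

lemma cfun_subspace_lincomb:
  assumes "cfun.subspace S" "finite J" "\<And>j. j \<in> J \<Longrightarrow> F j \<in> S"
  shows "(\<lambda>z. \<Sum>j\<in>J. c j * F j z) \<in> S"
proof -
  have "(\<lambda>z. \<Sum>j\<in>J. c j * F j z) = (\<Sum>j\<in>J. (\<lambda>z. c j * F j z))"
    by (simp add: fun_eq_iff sum_fun_apply)
  also have "\<dots> \<in> S"
    using assms by (intro cfun.subspace_sum cfun.subspace_scale) auto
  finally show ?thesis .
qed

lemma subspace_image_mult: "cfun.subspace S \<Longrightarrow> cfun.subspace ((\<lambda>f z. h z * f z) ` S)"
proof -
  have "module_hom (\<lambda>c f z. c * f z) (\<lambda>c f z. c * f z) (\<lambda>f z. h z * f z)"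
    by unfold_locales (simp_all add: fun_eq_iff algebra_simps)
  then show "cfun.subspace S \<Longrightarrow> cfun.subspace ((\<lambda>f z. h z * f z) ` S)"
    by (rule module_hom.subspace_image)
qed

section \<open>Spaces of theta functions\<close>

lemma subspace_Hspace: "cfun.subspace (Hspace K \<tau>)"
  unfolding cfun.subspace_def
proof (intro conjI ballI allI)
  show "0 \<in> Hspace K \<tau>"
    unfolding Hspace_def by (auto intro!: exI[of _ "\<lambda>_. 0"])
next
  fix f g
  assume "f \<in> Hspace K \<tau>" "g \<in> Hspace K \<tau>"
  then obtain c d where "f = (\<lambda>z. \<Sum>m<K. c m * theta m K \<tau> z)" "g = (\<lambda>z. \<Sum>m<K. d m * theta m K \<tau> z)"
    unfolding Hspace_def by blast
  then show "f + g \<in> Hspace K \<tau>"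
    unfolding Hspace_def
    by (auto simp: fun_eq_iff sum.distrib distrib_right intro!: exI[of _ "\<lambda>m. c m + d m"])
next
  fix a :: complex and f
  assume "f \<in> Hspace K \<tau>"
  then obtain c where "f = (\<lambda>z. \<Sum>m<K. c m * theta m K \<tau> z)"
    unfolding Hspace_def by blast
  then show "(\<lambda>z. a * f z) \<in> Hspace K \<tau>"
    unfolding Hspace_def
    by (auto simp: sum_distrib_left mult.assoc intro!: exI[of _ "\<lambda>m. a * c m"])
qed

lemma subspace_Hplus: "cfun.subspace (Hplus K \<tau>)"
  using subspace_Hspace[of K \<tau>] unfolding cfun.subspace_def Hplus_def by auto

lemma subspace_Hminus: "cfun.subspace (Hminus K \<tau>)"
  using subspace_Hspace[of K \<tau>] unfolding cfun.subspace_def Hminus_def by auto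

lemma theta_int_in_Hspace:
  assumes "K > 0"
  shows "theta_int K \<tau> m \<in> Hspace K \<tau>"
proof -
  define r where "r = nat (m mod int K)"
  have "r < K" "int r = m mod int K"
    using assms by (simp_all add: r_def nat_less_iff)
  have "theta_int K \<tau> m z = (\<Sum>n<K. (if n = r then 1 else 0) * theta n K \<tau> z)" for z
  proof -
    have "(\<Sum>n<K. (if n = r then 1 else 0) * theta n K \<tau> z) = (\<Sum>n<K. if n = r then theta n K \<tau> z else 0)"
      by (intro sum.cong) auto
    also have "\<dots> = theta_int K \<tau> (int r) z"
      using \<open>r < K\<close> by (simp add: theta_eq_theta_int)
    also have "\<dots> = theta_int K \<tau> m z"
      by (rule fun_cong[OF theta_int_cong]) (simp add: \<open>int r = m mod int K\<close>)
    finally show ?thesis ..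
  qed
  then show ?thesis
    unfolding Hspace_def by (auto simp: fun_eq_iff)
qed

lemma holomorphic_Hspace:
  assumes "K > 0" "Im \<tau> > 0" "f \<in> Hspace K \<tau>"
  shows "f holomorphic_on UNIV"
proof -
  obtain c where "f = (\<lambda>z. \<Sum>m<K. c m * theta_int K \<tau> (int m) z)"
    using assms(3) unfolding Hspace_def theta_eq_theta_int by blast
  then show ?thesis
    using assms(1,2) by (simp add: holomorphic_on_sum holomorphic_on_mult holomorphic_theta_int)
qed

lemma Hspace_mult:
  assumes K: "K > 0" and L: "L > 0" and \<tau>: "Im \<tau> > 0"
    and f: "f \<in> Hspace L \<tau>" and g: "g \<in> Hspace K \<tau>"
  shows "(\<lambda>z. f z * g z) \<in> Hspace (K + L) \<tau>"
proof -
  obtain c d where f_eq: "f = (\<lambda>z. \<Sum>m<L. c m * theta_int L \<tau> (int m) z)"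
    and g_eq: "g = (\<lambda>z. \<Sum>n<K. d n * theta_int K \<tau> (int n) z)"
    using f g unfolding Hspace_def theta_eq_theta_int by blast
  have theta_g: "(\<lambda>z. theta_int L \<tau> (int m) z * g z) \<in> Hspace (K + L) \<tau>" for m
  proof -
    have "(\<lambda>z. theta_int L \<tau> (int m) z * theta_int K \<tau> (int n) z) \<in> Hspace (K + L) \<tau>" for n
      unfolding theta_int_mult[OF K L \<tau>]
      by (intro cfun_subspace_lincomb subspace_Hspace theta_int_in_Hspace) (use K in auto)
    then have "(\<lambda>z. \<Sum>n<K. d n * (theta_int L \<tau> (int m) z * theta_int K \<tau> (int n) z)) \<in> Hspace (K + L) \<tau>"
      by (intro cfun_subspace_lincomb subspace_Hspace) auto
    then show ?thesis
      by (simp add: g_eq sum_distrib_left mult.left_commute)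
  qed
  have "(\<lambda>z. \<Sum>m<L. c m * (theta_int L \<tau> (int m) z * g z)) \<in> Hspace (K + L) \<tau>"
    by (intro cfun_subspace_lincomb subspace_Hspace theta_g) auto
  then show ?thesis
    by (simp add: f_eq sum_distrib_right mult.assoc)
qed

lemma Hminus_mult_Hplus:
  assumes "K > 0" "L > 0" "Im \<tau> > 0" "f \<in> Hminus L \<tau>" "g \<in> Hplus K \<tau>"
  shows "(\<lambda>z. f z * g z) \<in> Hminus (K + L) \<tau>"
  using assms Hspace_mult[OF assms(1-3)] by (auto simp: Hminus_def Hplus_def)

definition theta_odd :: "nat \<Rightarrow> complex \<Rightarrow> int \<Rightarrow> complex \<Rightarrow> complex" where
  "theta_odd K \<tau> m z = theta_int K \<tau> m z - theta_int K \<tau> (- m) z"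

definition theta_even :: "nat \<Rightarrow> complex \<Rightarrow> int \<Rightarrow> complex \<Rightarrow> complex" where
  "theta_even K \<tau> m z = theta_int K \<tau> m z + theta_int K \<tau> (- m) z"

lemma theta_odd_in_Hminus:
  assumes "K > 0"
  shows "theta_odd K \<tau> m \<in> Hminus K \<tau>"
proof -
  have "theta_odd K \<tau> m = theta_int K \<tau> m + (\<lambda>z. (- 1) * theta_int K \<tau> (- m) z)"
    by (simp add: fun_eq_iff theta_odd_def)
  also have "\<dots> \<in> Hspace K \<tau>"
    using assms by (intro cfun.subspace_add[OF subspace_Hspace] cfun.subspace_scale[OF subspace_Hspace]
        theta_int_in_Hspace)
  finally show ?thesis
    by (simp add: Hminus_def theta_odd_def theta_int_uminus)
qed

lemma theta_even_in_Hplus: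
  assumes "K > 0"
  shows "theta_even K \<tau> m \<in> Hplus K \<tau>"
proof -
  have "theta_even K \<tau> m = theta_int K \<tau> m + theta_int K \<tau> (- m)"
    by (simp add: fun_eq_iff theta_even_def)
  also have "\<dots> \<in> Hspace K \<tau>"
    using assms by (intro cfun.subspace_add[OF subspace_Hspace] theta_int_in_Hspace)
  finally show ?thesis
    by (simp add: Hplus_def theta_even_def theta_int_uminus)
qed

lemma theta_odd_reflect: "theta_odd K \<tau> (int K - m) z = - theta_odd K \<tau> m z"
proof -
  have "theta_int K \<tau> (int K - m) = theta_int K \<tau> (- m)"
    using theta_int_shift[of K \<tau> "- m" 1] by simp
  moreover have "theta_int K \<tau> (- (int K - m)) = theta_int K \<tau> m"
    using theta_int_shift[of K \<tau> m "- 1"] by simp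
  ultimately show ?thesis
    by (simp add: theta_odd_def)
qed

(* The indices m and K - m give opposite functions, and m = 0 and 2 m = K give 0. *)
lemma theta_odd_in_span:
  assumes "m < K"
  shows "theta_odd K \<tau> (int m) \<in> cfun.span ((\<lambda>m. theta_odd K \<tau> (int m)) ` {1..(K - 1) div 2})"
    (is "_ \<in> cfun.span ?T")
proof -
  consider "m = 0" | "m \<in> {1..(K - 1) div 2}" | "K - m \<in> {1..(K - 1) div 2}" | "2 * m = K"
    using assms by fastforce
  then show ?thesis
  proof cases
    case 1
    then have "theta_odd K \<tau> (int m) = 0"
      by (simp add: fun_eq_iff theta_odd_def)
    then show ?thesis
      by (simp add: cfun.span_zero)
  next
    case 2
    then show ?thesis
      by (intro cfun.span_base imageI)
  next
    case 3
    have "theta_odd K \<tau> (int m) = (\<lambda>z. (- 1) * theta_odd K \<tau> (int (K - m)) z)"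
      using assms theta_odd_reflect[of K \<tau> "int m"] by (simp add: fun_eq_iff of_nat_diff)
    also have "\<dots> \<in> cfun.span ?T"
      using 3 by (intro cfun.span_scale cfun.span_base imageI)
    finally show ?thesis .
  next
    case 4
    then have "int K - int m = int m"
      by simp
    then have "theta_odd K \<tau> (int m) z = - theta_odd K \<tau> (int m) z" for z
      using theta_odd_reflect[of K \<tau> "int m" z] by simp
    then have "theta_odd K \<tau> (int m) = 0"
      by (simp add: fun_eq_iff eq_neg_iff_add_eq_0)
    then show ?thesis
      by (simp add: cfun.span_zero)
  qed
qed

lemma Hminus_subset_span_theta_odd:
  "Hminus K \<tau> \<subseteq> cfun.span ((\<lambda>m. theta_odd K \<tau> (int m)) ` {1..(K - 1) div 2})"
  (is "_ \<subseteq> cfun.span ?T")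
proof
  fix f
  assume "f \<in> Hminus K \<tau>"
  then obtain c where f_eq: "f = (\<lambda>z. \<Sum>m<K. c m * theta_int K \<tau> (int m) z)"
    and odd: "\<And>z. f (- z) = - f z"
    unfolding Hminus_def Hspace_def theta_eq_theta_int by blast
  have "f z = (\<Sum>m<K. (c m / 2) * theta_odd K \<tau> (int m) z)" for z
  proof -
    have "f z = (f z - f (- z)) / 2"
      using odd[of z] by simp
    also have "\<dots> = (\<Sum>m<K. c m * theta_odd K \<tau> (int m) z) / 2"
      by (simp add: f_eq theta_int_uminus theta_odd_def sum_subtractf[symmetric] right_diff_distrib)
    also have "\<dots> = (\<Sum>m<K. (c m / 2) * theta_odd K \<tau> (int m) z)"
      by (simp add: sum_divide_distrib)
    finally show ?thesis .
  qed
  then have "f = (\<lambda>z. \<Sum>m<K. (c m / 2) * theta_odd K \<tau> (int m) z)"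
    by blast
  moreover have "(\<lambda>z. \<Sum>m<K. (c m / 2) * theta_odd K \<tau> (int m) z) \<in> cfun.span ?T"
    by (intro cfun_subspace_lincomb cfun.subspace_span theta_odd_in_span) auto
  ultimately show "f \<in> cfun.span ?T"
    by simp
qed

lemma theta_even_fourier_coeff:
  assumes "K > 0" "Im \<tau> > 0"
  shows "((\<lambda>x::real. theta_even K \<tau> m (of_real x) * exp (- 2 * pi * \<i> * of_int n * of_real x))
           has_integral ((if n mod int K = m mod int K then theta_term K \<tau> 0 n else 0)
                        + (if n mod int K = (- m) mod int K then theta_term K \<tau> 0 n else 0))) {0..1}"
  unfolding theta_even_def distrib_right
  by (intro has_integral_add theta_int_fourier_coeff assms)

(* Among the theta_j + theta_{-j} with j <= K/2, only the one with j = i has a nonzero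
   i-th Fourier coefficient. *)
lemma theta_even_independent:
  assumes K: "K > 0" and \<tau>: "Im \<tau> > 0"
    and zero: "\<And>z. (\<Sum>j\<le>K div 2. w j * theta_even K \<tau> (int j) z) = 0" and i: "i \<le> K div 2"
  shows "w i = 0"
proof -
  define coeff where "coeff j = (if int i mod int K = int j mod int K then theta_term K \<tau> 0 (int i) else 0)
      + (if int i mod int K = (- int j) mod int K then theta_term K \<tau> 0 (int i) else 0)" for j :: nat
  have "((\<lambda>x::real. \<Sum>j\<le>K div 2. w j * (theta_even K \<tau> (int j) (of_real x)
                                         * exp (- 2 * pi * \<i> * of_int (int i) * of_real x)))
         has_integral (\<Sum>j\<le>K div 2. w j * coeff j)) {0..1}"
    unfolding coeff_def by (intro has_integral_sum has_integral_mult_right theta_even_fourier_coeff K \<tau>) auto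
  moreover have "(\<lambda>x::real. \<Sum>j\<le>K div 2. w j * (theta_even K \<tau> (int j) (of_real x)
                                         * exp (- 2 * pi * \<i> * of_int (int i) * of_real x))) = (\<lambda>_. 0)"
    using zero by (simp add: fun_eq_iff mult.assoc[symmetric] sum_distrib_right[symmetric])
  ultimately have "(\<Sum>j\<le>K div 2. w j * coeff j) = 0"
    using has_integral_unique has_integral_0 by metis
  moreover have "coeff j = 0" if "j \<le> K div 2" "j \<noteq> i" for j
  proof -
    have "int i mod int K \<noteq> int j mod int K" "int i mod int K \<noteq> (- int j) mod int K"
      using eq_if_mod_eq_plus_minus[OF i that(1)] that(2) by auto
    then show ?thesis
      by (simp add: coeff_def)
  qed
  then have "(\<Sum>j\<le>K div 2. w j * coeff j) = w i * coeff i"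
    using i by (subst sum.remove[of _ i]) (auto intro!: sum.neutral)
  moreover have "coeff i \<noteq> 0"
    using theta_term_nonzero[of K \<tau> 0 "int i"] by (auto simp: coeff_def)
  ultimately show ?thesis
    by simp
qed

lemma theta_odd_nonzero:
  assumes K: "K > 0" and \<tau>: "Im \<tau> > 0" and m: "\<not> int K dvd 2 * m"
  shows "theta_odd K \<tau> m \<noteq> (\<lambda>_. 0)"
proof
  assume "theta_odd K \<tau> m = (\<lambda>_. 0)"
  moreover have "((\<lambda>x::real. theta_odd K \<tau> m (of_real x) * exp (- 2 * pi * \<i> * of_int m * of_real x))
                  has_integral theta_term K \<tau> 0 m) {0..1}"
  proof -
    have "m mod int K \<noteq> (- m) mod int K"
      using m by (metis mod_eq_dvd_iff diff_minus_eq_add mult_2)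
    then have "((\<lambda>x::real. theta_int K \<tau> (- m) (of_real x) * exp (- 2 * pi * \<i> * of_int m * of_real x))
                has_integral 0) {0..1}"
      using theta_int_fourier_coeff[OF K \<tau>, of "- m" m] by simp
    from has_integral_diff[OF _ this] show ?thesis
      using theta_int_fourier_coeff[OF K \<tau>, of m m] unfolding theta_odd_def left_diff_distrib by simp
  qed
  ultimately have "theta_term K \<tau> 0 m = 0"
    using has_integral_unique has_integral_0 by fastforce
  then show False
    by (simp add: theta_term_nonzero)
qed

section \<open>Multiplication by the odd theta function of level 4\<close>

lemma theta4_minus_eq_theta_odd: "theta4_minus \<tau> = theta_odd 4 \<tau> 1"
proof -
  have "theta_int 4 \<tau> 3 = theta_int 4 \<tau> (- 1)"
    by (rule theta_int_cong) simp
  then show ?thesis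
    by (simp add: fun_eq_iff theta4_minus_def theta_odd_def theta_eq_theta_int)
qed

lemma theta4_minus_in_Hminus: "theta4_minus \<tau> \<in> Hminus 4 \<tau>"
  unfolding theta4_minus_eq_theta_odd by (rule theta_odd_in_Hminus) simp

lemma theta4_minus_nonzero:
  assumes "Im \<tau> > 0"
  shows "theta4_minus \<tau> \<noteq> (\<lambda>_. 0)"
  unfolding theta4_minus_eq_theta_odd by (rule theta_odd_nonzero[OF _ assms]) simp_all

lemma Hminus_4: "Hminus 4 \<tau> = {(\<lambda>z. c * theta4_minus \<tau> z) | c. True}"
proof
  have "Hminus 4 \<tau> \<subseteq> cfun.span {theta4_minus \<tau>}"
    using Hminus_subset_span_theta_odd[of 4 \<tau>] by (simp add: theta4_minus_eq_theta_odd)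
  then show "Hminus 4 \<tau> \<subseteq> {(\<lambda>z. c * theta4_minus \<tau> z) | c. True}"
    by (auto simp: cfun.span_singleton)
  show "{(\<lambda>z. c * theta4_minus \<tau> z) | c. True} \<subseteq> Hminus 4 \<tau>"
    using cfun.subspace_scale[OF subspace_Hminus theta4_minus_in_Hminus] by blast
qed

lemma theta4_minus_mult_cancel:
  assumes K: "K > 0" and \<tau>: "Im \<tau> > 0" and fg: "f \<in> Hspace K \<tau>" "g \<in> Hspace K \<tau>"
    and eq: "\<And>z. theta4_minus \<tau> z * f z = theta4_minus \<tau> z * g z"
  shows "f = g"
proof (rule holomorphic_mult_left_cancel[OF _ theta4_minus_nonzero[OF \<tau>] _ _ eq])
  show "continuous_on UNIV (theta4_minus \<tau>)"
    using holomorphic_Hspace[of 4 \<tau>] theta4_minus_in_Hminus \<tau>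
    by (auto simp: Hminus_def intro: holomorphic_on_imp_continuous_on)
  show "f holomorphic_on UNIV" "g holomorphic_on UNIV"
    using fg holomorphic_Hspace[OF K \<tau>] by auto
qed

lemma independent_theta4_minus_mult_theta_even:
  assumes K: "K > 0" and \<tau>: "Im \<tau> > 0"
  defines "v \<equiv> \<lambda>j z. theta4_minus \<tau> z * theta_even K \<tau> (int j) z"
  shows "inj_on v {..K div 2}" and "cfun.independent (v ` {..K div 2})"
proof -
  have "\<forall>i\<in>{..K div 2}. w i = 0" if "(\<Sum>j\<le>K div 2. (\<lambda>z. w j * v j z)) = 0" for w
  proof
    fix i
    assume "i \<in> {..K div 2}"
    have "(\<lambda>z. \<Sum>j\<le>K div 2. w j * theta_even K \<tau> (int j) z) = (\<lambda>z. 0)"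
    proof (rule theta4_minus_mult_cancel[OF K \<tau>])
      show "(\<lambda>z. \<Sum>j\<le>K div 2. w j * theta_even K \<tau> (int j) z) \<in> Hspace K \<tau>"
        using theta_even_in_Hplus[OF K] by (intro cfun_subspace_lincomb subspace_Hspace) (auto simp: Hplus_def)
      show "(\<lambda>z. 0) \<in> Hspace K \<tau>"
        using cfun.subspace_0[OF subspace_Hspace] by (simp add: zero_fun_def)
      show "theta4_minus \<tau> z * (\<Sum>j\<le>K div 2. w j * theta_even K \<tau> (int j) z) = theta4_minus \<tau> z * 0" for z
        using fun_cong[OF that, of z] by (simp add: v_def sum_fun_apply sum_distrib_left mult.left_commute)
    qed
    then show "w i = 0"
      using theta_even_independent[OF K \<tau>, of w i] \<open>i \<in> {..K div 2}\<close> by (simp add: fun_eq_iff)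
  qed
  then show "inj_on v {..K div 2}" "cfun.independent (v ` {..K div 2})"
    using cfun.independent_image_if_scalars_zero[of "{..K div 2}" v] by auto
qed

lemma bij_betw_mult_theta4_minus:
  assumes \<tau>: "Im \<tau> > 0" and k: "k \<ge> 1"
  shows "bij_betw (\<lambda>f z. theta4_minus \<tau> z * f z) (Hplus (2 * k) \<tau>) (Hminus (2 * k + 4) \<tau>)"
proof -
  let ?\<Phi> = "\<lambda>f z. theta4_minus \<tau> z * f z"
  let ?v = "\<lambda>j z. theta4_minus \<tau> z * theta_even (2 * k) \<tau> (int j) z"
  let ?T = "(\<lambda>m. theta_odd (2 * k + 4) \<tau> (int m)) ` {1..(2 * k + 4 - 1) div 2}"
  have K: "2 * k > 0"
    using k by simp
  have maps: "?\<Phi> ` Hplus (2 * k) \<tau> \<subseteq> Hminus (2 * k + 4) \<tau>"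
    using Hminus_mult_Hplus[OF K _ \<tau> theta4_minus_in_Hminus] by auto
  have inj: "inj_on ?\<Phi> (Hplus (2 * k) \<tau>)"
    using theta4_minus_mult_cancel[OF K \<tau>] by (auto simp: inj_on_def Hplus_def fun_eq_iff)
  have "?\<Phi> ` Hplus (2 * k) \<tau> = Hminus (2 * k + 4) \<tau>"
  proof (rule cfun.subspace_eq_if_card_le[OF subspace_image_mult[OF subspace_Hplus] maps
        Hminus_subset_span_theta_odd])
    show "?v ` {..k} \<subseteq> ?\<Phi> ` Hplus (2 * k) \<tau>"
      using theta_even_in_Hplus[OF K] by auto
    show "cfun.independent (?v ` {..k})"
      using independent_theta4_minus_mult_theta_even(2)[OF K \<tau>] by simp
    have "card ?T \<le> k + 1"
      using card_image_le[of "{1..(2 * k + 4 - 1) div 2}"] by simp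
    also have "\<dots> = card (?v ` {..k})"
      using card_image[OF independent_theta4_minus_mult_theta_even(1)[OF K \<tau>]] by simp
    finally show "card ?T \<le> card (?v ` {..k})" .
  qed simp
  with inj show ?thesis
    by (simp add: bij_betw_def)
qed

theorem corollary5p16:
  fixes \<tau> :: complex
  assumes "Im \<tau> > 0"
  shows "(theta4_minus \<tau> \<in> Hminus 4 \<tau> \<and> theta4_minus \<tau> \<noteq> (\<lambda>_. 0) \<and>
          Hminus 4 \<tau> = {(\<lambda>z. c * theta4_minus \<tau> z) | c :: complex. True})
       \<and> (\<forall>k::nat. k \<ge> 1 \<longrightarrow>
            (\<forall>f \<in> Hplus (2*k) \<tau>. \<forall>g \<in> Hplus (2*k) \<tau>. \<forall>a b :: complex.
               (\<lambda>z. theta4_minus \<tau> z * (a * f z + b * g z)) =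
               (\<lambda>z. a * (theta4_minus \<tau> z * f z) + b * (theta4_minus \<tau> z * g z)))
          \<and> bij_betw (\<lambda>f z. theta4_minus \<tau> z * f z) (Hplus (2*k) \<tau>) (Hminus (2*k+4) \<tau>))"
  using theta4_minus_in_Hminus theta4_minus_nonzero[OF assms] Hminus_4
    bij_betw_mult_theta4_minus[OF assms]
  by (auto simp: fun_eq_iff algebra_simps)

end
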